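(* Let $f\in\mathcal H_{(d)}$ be nonzero and $x,y\in\mathbb C^{n+1}$ nonzero. Suppose $\operatorname{rank}Df(x)|_{x^\perp}=n$, $u<1$, and $\mu(f,y)<\infty$. Then \[\mu(f,x)\le\mu(f,y)\Big(\frac{1}{(1-u)^2}+\delta(f,x)\,d_P(x,y)\Big).\]
   Context: $n\ge2$, $(d)=(d_1,\dots,d_n)$, $D=\max_i d_i\ge2$. $\mathcal H_{(d)}$: systems of $n$ homogeneous complex polynomials in $n+1$ variables of degrees $d_i$ with the Bombieri–Weyl inner product $\langle f,g\rangle=\sum_i\sum_{|\alpha|=d_i}\frac{\alpha_0!\cdots\alpha_n!}{d_i!}f_{i,\alpha}\overline{g_{i,\alpha}}$. $x^\perp$ is the Hermitian orthogonal complement of $x$. $\mu(f,x)=\|f\|\,\|(Df(x)|_{x^\perp})^{-1}\mathrm{diag}(\sqrt{d_i}\|x\|^{d_i-1})\|$ (operator norm), $\infty$ if not invertible. $\delta(f,x)=\|x\|^{-1}\|(Df(x)|_{x^\perp})^{-1}\mathrm{diag}(d_i)f(x)\|$. $d_R(x,y)\in[0,\pi/2]$ with $\cos d_R=|\langle x,y\rangle|/(\|x\|\|y\|)$, $d_P=\sin d_R$. $u=\frac{D^{3/2}}{2}\mu(f,x)d_R(x,y)$. *)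

theory Defs
  imports "HOL-Analysis.Analysis"
begin

text \<open>The n equations are indexed by a finite type 'n (so n = CARD('n)),
the n+1 variables by 'n option (CARD('n option) = n+1). Points of C^(n+1) are
vectors of type complex^'n option. A homogeneous polynomial of degree k in the
n+1 variables is given by its coefficients on multi-indices alpha :: 'n option => nat
with total degree k. A system f in H_(d) is a coefficient function
f :: 'n => ('n option => nat) => complex vanishing outside the admissible monomials.\<close>

definition mindex :: "nat \<Rightarrow> ('v::finite \<Rightarrow> nat) set" where
  "mindex k = {\<alpha>. (\<Sum>j\<in>UNIV. \<alpha> j) = k}"

definition Hd :: "('n::finite \<Rightarrow> nat) \<Rightarrow> ('n \<Rightarrow> ('n option \<Rightarrow> nat) \<Rightarrow> complex) set" where
  "Hd d = {f. \<forall>i \<alpha>. \<alpha> \<notin> mindex (d i) \<longrightarrow> f i \<alpha> = 0}"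

definition monom_eval :: "('v::finite \<Rightarrow> nat) \<Rightarrow> complex^'v \<Rightarrow> complex" where
  "monom_eval \<alpha> x = (\<Prod>j\<in>UNIV. (x $ j) ^ \<alpha> j)"

definition peval :: "('n::finite \<Rightarrow> nat) \<Rightarrow> ('n \<Rightarrow> ('n option \<Rightarrow> nat) \<Rightarrow> complex)
    \<Rightarrow> complex^'n option \<Rightarrow> complex^'n" where
  "peval d f x = (\<chi> i. \<Sum>\<alpha>\<in>mindex (d i). f i \<alpha> * monom_eval \<alpha> x)"

definition bw_norm :: "('n::finite \<Rightarrow> nat) \<Rightarrow> ('n \<Rightarrow> ('n option \<Rightarrow> nat) \<Rightarrow> complex) \<Rightarrow> real" where
  "bw_norm d f = sqrt (\<Sum>i\<in>UNIV. \<Sum>\<alpha>\<in>mindex (d i).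
      (\<Prod>j\<in>UNIV. fact (\<alpha> j)) / fact (d i) * (cmod (f i \<alpha>))\<^sup>2)"

definition Df :: "('n::finite \<Rightarrow> nat) \<Rightarrow> ('n \<Rightarrow> ('n option \<Rightarrow> nat) \<Rightarrow> complex)
    \<Rightarrow> complex^'n option \<Rightarrow> complex^'n option \<Rightarrow> complex^'n" where
  "Df d f x = frechet_derivative (peval d f) (at x)"

definition hinner :: "complex^'v::finite \<Rightarrow> complex^'v \<Rightarrow> complex" where
  "hinner x y = (\<Sum>j\<in>UNIV. x $ j * cnj (y $ j))"

definition hperp :: "complex^'v::finite \<Rightarrow> (complex^'v) set" where
  "hperp x = {v. hinner v x = 0}"

text \<open>Complex rank of a (complex-linear) map L restricted to a complex subspace S:
the complex dimension of L ` S, i.e. half its real dimension.\<close>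
definition crank :: "('a::euclidean_space \<Rightarrow> 'b::euclidean_space) \<Rightarrow> 'a set \<Rightarrow> nat" where
  "crank L S = dim (L ` S) div 2"

definition restr_invertible :: "('n::finite \<Rightarrow> nat) \<Rightarrow> ('n \<Rightarrow> ('n option \<Rightarrow> nat) \<Rightarrow> complex)
    \<Rightarrow> complex^'n option \<Rightarrow> bool" where
  "restr_invertible d f x = bij_betw (Df d f x) (hperp x) UNIV"

definition restr_inv :: "('n::finite \<Rightarrow> nat) \<Rightarrow> ('n \<Rightarrow> ('n option \<Rightarrow> nat) \<Rightarrow> complex)
    \<Rightarrow> complex^'n option \<Rightarrow> complex^'n \<Rightarrow> complex^'n option" where
  "restr_inv d f x = inv_into (hperp x) (Df d f x)"

definition mu :: "('n::finite \<Rightarrow> nat) \<Rightarrow> ('n \<Rightarrow> ('n option \<Rightarrow> nat) \<Rightarrow> complex)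
    \<Rightarrow> complex^'n option \<Rightarrow> ereal" where
  "mu d f x = (if restr_invertible d f x
     then ereal (bw_norm d f * onorm (\<lambda>w. restr_inv d f x
             (\<chi> i. complex_of_real (sqrt (real (d i)) * norm x powr (real (d i) - 1)) * w $ i)))
     else \<infinity>)"

definition delta :: "('n::finite \<Rightarrow> nat) \<Rightarrow> ('n \<Rightarrow> ('n option \<Rightarrow> nat) \<Rightarrow> complex)
    \<Rightarrow> complex^'n option \<Rightarrow> real" where
  "delta d f x = inverse (norm x) *
     norm (restr_inv d f x (\<chi> i. of_nat (d i) * peval d f x $ i))"

definition dR :: "complex^'v::finite \<Rightarrow> complex^'v \<Rightarrow> real" where
  "dR x y = arccos (cmod (hinner x y) / (norm x * norm y))"

definition dP :: "complex^'v::finite \<Rightarrow> complex^'v \<Rightarrow> real" where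
  "dP x y = sin (dR x y)"

end

theory Submission
  imports Defs "HOL-Combinatorics.Multiset_Permutations"
begin

(*
  We write mu(f,x) = ||f|| * M(x), where M(x) is the operator norm of the inverse of
  Df(x) restricted to x-perp, composed with the scaling diag(sqrt(d_i) ||x||^(d_i - 1)).

  A homogeneous polynomial of degree k is the diagonal of a symmetric
     k-linear form whose coefficient tensor (indexed by words of length k) has Euclidean
     norm equal to the Bombieri-Weyl norm; this is a multinomial counting argument.
     Cauchy-Schwarz then gives the Kellogg-type bounds
       |Df(x)_i w| <= k ||f_i|| ||x||^(k-1) ||w||   and
       |Df(x+e)_i w - Df(x)_i w| <= k ||f_i|| ||w|| ((||x||+||e||)^(k-1) - ||x||^(k-1)).
  2. Linear algebra. Full rank of Df(x) on x-perp makes the restriction bijective, its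
     inverse is linear, and Df satisfies Euler's identity and is homogeneous in x.
  3. Geometry. Some rescaling c y with |c| = ||x||/||y|| lies within ||x|| dR(x,y) of x,
     and the x-component of a vector orthogonal to y is at most its norm times sin dR(x,y).
  4. Main estimate. For a vector v pick (by homogeneity) z in y-perp with
     Df(cy) z = diag_x v and ||z|| <= M(y) ||v||. Splitting diag_x v = Df(x) z + (Df(cy) - Df(x)) z
     and z along x gives M(x) <= M(y) (1 + sin dR(x,y) delta(f,x) + ||f|| M(x) G), where
     G = sqrt(D) ((1+s)^(D-1) - 1) and s = ||cy - x||/||x|| <= dR(x,y). Using sqrt(D) mu(f,x) >= 1,
     a scalar inequality bounds 1 + ||f|| M(x) G by 1/(1-u)^2, and Lemma 8 follows.
*)

section \<open>Words, exponent vectors and multinomial counts\<close>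

text \<open>Words of length k over the finite alphabet of variables; a word xs represents
  the monomial prod_j x_(xs!j).\<close>
definition words :: "nat \<Rightarrow> ('v::finite) list set" where
  "words k = {xs. length xs = k}"

lemma finite_words[simp]: "finite (words k)"
proof -
  have "words k = {xs. set xs \<subseteq> UNIV \<and> length xs = k}" by (auto simp: words_def)
  thus ?thesis using finite_lists_length_eq[of "UNIV::'a set" k] by (simp add: words_def)
qed

lemma sum_words_prod:
  fixes g :: "nat \<Rightarrow> 'v::finite \<Rightarrow> 'a::comm_semiring_1"
  shows "(\<Sum>xs\<in>words k. \<Prod>j<k. g j (xs!j)) = (\<Prod>j<k. \<Sum>v\<in>UNIV. g j v)"
proof (induction k arbitrary: g)
  case 0
  then show ?case by (simp add: words_def)
next
  case (Suc k)
  have words_Suc: "words (Suc k) = (\<lambda>(xs, n). n#xs) ` (words k \<times> (UNIV::'v set))"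
    using lists_length_Suc_eq[of "UNIV::'v set" k] by (simp add: words_def)
  have inj: "inj_on (\<lambda>(xs, n). n#xs) (words k \<times> (UNIV::'v set))"
    by (auto simp: inj_on_def)
  have "(\<Sum>xs\<in>words (Suc k). \<Prod>j<Suc k. g j (xs!j))
      = (\<Sum>(xs,n)\<in>words k \<times> UNIV. g 0 n * (\<Prod>j<k. g (Suc j) (xs!j)))"
    unfolding words_Suc by (subst sum.reindex[OF inj])
      (simp add: case_prod_unfold prod.lessThan_Suc_shift del: prod.lessThan_Suc)
  also have "\<dots> = (\<Sum>n\<in>UNIV. g 0 n) * (\<Sum>xs\<in>words k. (\<Prod>j<k. g (Suc j) (xs!j)))"
    by (simp add: sum.cartesian_product[symmetric] sum_distrib_left sum_distrib_right
        sum.swap[of _ "words k"])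
  also have "\<dots> = (\<Prod>j<Suc k. \<Sum>v\<in>UNIV. g j v)"
    using Suc.IH[of "\<lambda>j. g (Suc j)"] by (simp only: prod.lessThan_Suc_shift)
  finally show ?case .
qed

definition word_exp :: "'v list \<Rightarrow> 'v \<Rightarrow> nat" where
  "word_exp xs = count (mset xs)"

lemma prod_word_exp:
  fixes x :: "'v::finite \<Rightarrow> 'a::comm_monoid_mult"
  shows "(\<Prod>j<length xs. x (xs!j)) = (\<Prod>v\<in>UNIV. x v ^ word_exp xs v)"
proof (induction xs)
  case Nil
  then show ?case by (simp add: word_exp_def)
next
  case (Cons a xs)
  have "(\<Prod>v\<in>UNIV. x v ^ word_exp (a#xs) v)
      = (\<Prod>v\<in>UNIV. x v ^ word_exp xs v * (if v = a then x v else 1))"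
    by (intro prod.cong) (auto simp: word_exp_def mult.commute)
  also have "\<dots> = (\<Prod>v\<in>UNIV. x v ^ word_exp xs v) * x a"
    by (simp add: prod.distrib prod.delta mult.commute)
  finally have "(\<Prod>v\<in>UNIV. x v ^ word_exp (a#xs) v) = (\<Prod>v\<in>UNIV. x v ^ word_exp xs v) * x a" .
  moreover have "(\<Prod>j<length (a#xs). x ((a#xs)!j)) = x a * (\<Prod>j<length xs. x (xs!j))"
    by (simp only: length_Cons prod.lessThan_Suc_shift nth_Cons_0 nth_Cons_Suc)
  ultimately show ?case using Cons by (simp add: mult.commute)
qed

lemma sum_word_exp: "(\<Sum>v\<in>(UNIV::'v::finite set). word_exp xs v) = length xs"
proof (induction xs)
  case Nil then show ?case by (simp add: word_exp_def)
next
  case (Cons a xs)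
  have "(\<Sum>v\<in>(UNIV::'v set). word_exp (a#xs) v) = (\<Sum>v\<in>UNIV. word_exp xs v + (if v = a then 1 else 0))"
    by (intro sum.cong) (auto simp: word_exp_def)
  then show ?case using Cons by (simp add: sum.distrib)
qed

lemma word_exp_eq_iff: "word_exp xs = word_exp ys \<longleftrightarrow> mset xs = mset ys"
  by (simp add: word_exp_def multiset_eq_iff fun_eq_iff)

lemma word_exp_in_mindex: "length xs = k \<Longrightarrow> word_exp (xs::'v::finite list) \<in> mindex k"
  by (simp add: mindex_def sum_word_exp)

lemma mindex_word_exp_surj:
  assumes "(a::'v::finite \<Rightarrow> nat) \<in> mindex k"
  obtains xs where "word_exp xs = a" "length xs = k"
proof -
  have fin: "finite {x. a x > 0}" by simp
  obtain xs where xs: "mset xs = Abs_multiset a" using ex_mset by blast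
  have "word_exp xs = a" using count_Abs_multiset[OF fin] xs by (simp add: word_exp_def)
  moreover have "length xs = k"
    using sum_word_exp[of xs] assms \<open>word_exp xs = a\<close> by (simp add: mindex_def)
  ultimately show ?thesis using that by blast
qed

lemma word_fiber_eq:
  assumes "length xs = k"
  shows "{ys \<in> words k. word_exp ys = word_exp xs} = {ys. word_exp ys = word_exp (xs::'v::finite list)}"
proof -
  have "word_exp ys = word_exp xs \<Longrightarrow> length ys = k" for ys
    using assms by (metis word_exp_eq_iff size_mset)
  thus ?thesis by (auto simp: words_def)
qed

definition word_count :: "('v \<Rightarrow> nat) \<Rightarrow> nat" where
  "word_count a = card {ys. word_exp ys = a}"

lemma word_count_fact:
  assumes "(a::'v::finite \<Rightarrow> nat) \<in> mindex k"
  shows "real (word_count a) * (\<Prod>v\<in>UNIV. fact (a v)) = fact k"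
proof -
  obtain xs0 where xs0: "word_exp xs0 = a" "length xs0 = k"
    using mindex_word_exp_surj[OF assms] by blast
  let ?A = "mset xs0"
  have perms: "{ys. word_exp ys = a} = permutations_of_multiset ?A"
    using xs0 by (auto simp: permutations_of_multiset_def word_exp_eq_iff)
  have "(\<Prod>x\<in>set_mset ?A. fact (count ?A x)) = (\<Prod>v\<in>UNIV. fact (count ?A v) :: nat)"
    by (intro prod.mono_neutral_left) (auto, metis count_mset_0_iff fact_0 One_nat_def)
  also have "\<dots> = (\<Prod>v\<in>UNIV. fact (a v))" using xs0(1) by (simp add: word_exp_def)
  finally have "(\<Prod>x\<in>set_mset ?A. fact (count ?A x)) = (\<Prod>v\<in>UNIV. fact (a v) :: nat)" .
  with card_permutations_of_multiset_aux[of ?A] perms xs0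
  have "word_count a * (\<Prod>v\<in>UNIV. fact (a v) :: nat) = fact k" by (simp add: word_count_def)
  hence "real (word_count a * (\<Prod>v\<in>UNIV. fact (a v) :: nat)) = real (fact k)" by simp
  thus ?thesis by (simp add: of_nat_prod)
qed

lemma word_count_pos: "(a::'v::finite \<Rightarrow> nat) \<in> mindex k \<Longrightarrow> word_count a > 0"
  using word_count_fact[of a k] by (metis fact_nonzero gr0I mult_zero_left of_nat_0)

lemma sum_words_regroup:
  fixes h :: "('v::finite \<Rightarrow> nat) \<Rightarrow> 'b::field_char_0"
  shows "(\<Sum>xs\<in>words k. h (word_exp xs) / of_nat (word_count (word_exp xs))) = (\<Sum>a\<in>mindex k. h a)"
proof -
  have finM: "finite (mindex k :: ('v \<Rightarrow> nat) set)"
  proof -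
    have "mindex k \<subseteq> word_exp ` (words k :: 'v list set)"
      by (auto simp: words_def elim: mindex_word_exp_surj)
    thus ?thesis by (rule finite_surj[OF finite_words])
  qed
  have sub: "word_exp ` words k \<subseteq> (mindex k :: ('v \<Rightarrow> nat) set)"
    using word_exp_in_mindex by (auto simp: words_def)
  have "(\<Sum>xs\<in>words k. h (word_exp xs) / of_nat (word_count (word_exp xs)))
      = (\<Sum>a\<in>mindex k. \<Sum>xs\<in>{xs \<in> words k. word_exp xs = a}. h a / of_nat (word_count a))"
    by (subst sum.group[OF finite_words finM sub, symmetric]) (rule sum.cong; simp)
  also have "\<dots> = (\<Sum>a\<in>mindex k. h a)"
  proof (rule sum.cong[OF refl])
    fix a :: "'v \<Rightarrow> nat" assume a: "a \<in> mindex k"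
    obtain xs0 where xs0: "word_exp xs0 = a" "length xs0 = k"
      using mindex_word_exp_surj[OF a] by blast
    have "card {xs \<in> (words k :: 'v list set). word_exp xs = a} = word_count a"
      using word_fiber_eq[OF xs0(2)] xs0(1) by (simp add: word_count_def)
    thus "(\<Sum>xs\<in>{xs \<in> (words k :: 'v list set). word_exp xs = a}. h a / of_nat (word_count a)) = h a"
      using word_count_pos[OF a] by simp
  qed
  finally show ?thesis .
qed

section \<open>Polarization of a homogeneous polynomial\<close>

text \<open>Coefficients of the symmetric tensor of the polynomial with coefficients c:
  the coefficient of a monomial is spread evenly over all words representing it.\<close>
definition sym_coeff :: "(('v::finite \<Rightarrow> nat) \<Rightarrow> complex) \<Rightarrow> 'v list \<Rightarrow> complex" where
  "sym_coeff c xs = c (word_exp xs) / of_nat (word_count (word_exp xs))"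

definition polar :: "nat \<Rightarrow> (('v::finite \<Rightarrow> nat) \<Rightarrow> complex) \<Rightarrow> (nat \<Rightarrow> complex^'v) \<Rightarrow> complex" where
  "polar k c w = (\<Sum>xs\<in>words k. sym_coeff c xs * (\<Prod>j<k. w j $ (xs!j)))"

definition bw_comp :: "nat \<Rightarrow> (('v::finite \<Rightarrow> nat) \<Rightarrow> complex) \<Rightarrow> real" where
  "bw_comp k c = sqrt (\<Sum>a\<in>mindex k. (\<Prod>j\<in>UNIV. fact (a j)) / fact k * (cmod (c a))\<^sup>2)"

lemma polar_diag:
  fixes x :: "complex^'v::finite"
  shows "polar k c (\<lambda>_. x) = (\<Sum>a\<in>mindex k. c a * monom_eval a x)"
proof -
  have "polar k c (\<lambda>_. x)
      = (\<Sum>xs\<in>words k. (c (word_exp xs) * monom_eval (word_exp xs) x) / of_nat (word_count (word_exp xs)))"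
    unfolding polar_def sym_coeff_def
    by (intro sum.cong refl) (simp add: words_def monom_eval_def prod_word_exp[of "\<lambda>v. x $ v", symmetric])
  also have "\<dots> = (\<Sum>a\<in>mindex k. c a * monom_eval a x)"
    by (rule sum_words_regroup)
  finally show ?thesis .
qed

lemma bw_comp_nonneg: "bw_comp k c \<ge> 0"
  unfolding bw_comp_def
  by (intro real_sqrt_ge_zero sum_nonneg mult_nonneg_nonneg divide_nonneg_nonneg prod_nonneg) auto

lemma bw_comp_sq:
  "(bw_comp k c)\<^sup>2 = (\<Sum>a\<in>mindex k. (\<Prod>j\<in>UNIV. fact (a j)) / fact k * (cmod (c a))\<^sup>2)"
  unfolding bw_comp_def
  by (subst real_sqrt_pow2) (auto intro!: sum_nonneg mult_nonneg_nonneg divide_nonneg_nonneg prod_nonneg)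

text \<open>The Euclidean norm of the symmetric tensor equals the Bombieri-Weyl norm; this is
  exactly why the Bombieri-Weyl weights are the inverse multinomial coefficients.\<close>
lemma sym_coeff_norm_sq:
  fixes c :: "('v::finite \<Rightarrow> nat) \<Rightarrow> complex"
  shows "(\<Sum>xs\<in>words k. (cmod (sym_coeff c xs))\<^sup>2) = (bw_comp k c)\<^sup>2"
proof -
  have "(\<Sum>xs\<in>words k. (cmod (sym_coeff c xs))\<^sup>2)
      = (\<Sum>xs\<in>words k. ((cmod (c (word_exp xs)))\<^sup>2 / real (word_count (word_exp xs)))
                          / real (word_count (word_exp xs)))"
    by (intro sum.cong refl) (simp add: sym_coeff_def norm_divide power2_eq_square)
  also have "\<dots> = (\<Sum>a\<in>mindex k. (cmod (c a))\<^sup>2 / real (word_count a))"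
    using sum_words_regroup[where h="\<lambda>a. (cmod (c a))\<^sup>2 / real (word_count a)" and k=k] by simp
  also have "\<dots> = (\<Sum>a\<in>mindex k. (\<Prod>j\<in>UNIV. fact (a j)) / fact k * (cmod (c a))\<^sup>2)"
  proof (intro sum.cong refl)
    fix a :: "'v \<Rightarrow> nat" assume a: "a \<in> mindex k"
    have N: "real (word_count a) * (\<Prod>v\<in>UNIV. fact (a v)) = fact k" by (rule word_count_fact[OF a])
    have "real (word_count a) \<noteq> 0" using word_count_pos[OF a] by simp
    thus "(cmod (c a))\<^sup>2 / real (word_count a) = (\<Prod>j\<in>UNIV. fact (a j)) / fact k * (cmod (c a))\<^sup>2"
      by (simp add: N[symmetric] field_simps)
  qed
  finally show ?thesis by (simp add: bw_comp_sq)
qed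

lemma norm_vec_sq: "(norm (x::complex^'v::finite))\<^sup>2 = (\<Sum>v\<in>UNIV. (cmod (x $ v))\<^sup>2)"
  unfolding norm_vec_def L2_set_def by (subst real_sqrt_pow2) (auto intro!: sum_nonneg)

lemma sum_le_sqrt:
  fixes a b :: "'a \<Rightarrow> real"
  assumes "\<And>i. a i \<ge> 0" "\<And>i. b i \<ge> 0"
  shows "(\<Sum>i\<in>I. a i * b i) \<le> sqrt (\<Sum>i\<in>I. (a i)\<^sup>2) * sqrt (\<Sum>i\<in>I. (b i)\<^sup>2)"
  using L2_set_mult_ineq[where f=a and g=b and A=I] assms by (simp add: L2_set_def)

lemma polar_bound: "cmod (polar k c w) \<le> bw_comp k c * (\<Prod>j<k. norm (w j))"
proof -
  have "cmod (polar k c w) \<le> (\<Sum>xs\<in>words k. cmod (sym_coeff c xs) * cmod (\<Prod>j<k. w j $ (xs!j)))"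
    unfolding polar_def by (rule order_trans[OF norm_sum]) (simp add: norm_mult)
  also have "\<dots> \<le> sqrt (\<Sum>xs\<in>words k. (cmod (sym_coeff c xs))\<^sup>2)
                   * sqrt (\<Sum>xs\<in>words k. (cmod (\<Prod>j<k. w j $ (xs!j)))\<^sup>2)"
    by (rule sum_le_sqrt) auto
  also have "(\<Sum>xs\<in>words k. (cmod (\<Prod>j<k. w j $ (xs!j)))\<^sup>2)
      = (\<Sum>xs\<in>words k. \<Prod>j<k. (cmod (w j $ (xs!j)))\<^sup>2)"
    by (simp add: prod_norm[symmetric] prod_power_distrib)
  also have "\<dots> = (\<Prod>j<k. \<Sum>v\<in>UNIV. (cmod (w j $ v))\<^sup>2)"
    by (rule sum_words_prod)
  also have "\<dots> = (\<Prod>j<k. norm (w j))\<^sup>2"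
    by (simp add: norm_vec_sq prod_power_distrib)
  finally show ?thesis by (simp add: sym_coeff_norm_sq bw_comp_nonneg prod_nonneg)
qed

section \<open>The derivative of a homogeneous polynomial\<close>

definition dpolar :: "nat \<Rightarrow> (('v::finite \<Rightarrow> nat) \<Rightarrow> complex) \<Rightarrow> complex^'v \<Rightarrow> complex^'v \<Rightarrow> complex" where
  "dpolar k c x h = (\<Sum>m<k. polar k c (\<lambda>j. if j = m then h else x))"

lemma polar_slot:
  fixes h x :: "complex^'v::finite"
  assumes "m < k"
  shows "polar k c (\<lambda>j. if j = m then h else x)
    = (\<Sum>xs\<in>words k. sym_coeff c xs * (h $ (xs!m) * (\<Prod>j\<in>{..<k}-{m}. x $ (xs!j))))"
proof -
  have "(\<Prod>j<k. (if j = m then h else x) $ (xs!j)) = h $ (xs!m) * (\<Prod>j\<in>{..<k}-{m}. x $ (xs!j))"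
    for xs :: "'v list"
    using assms by (subst prod.remove[of "{..<k}" m]) (auto intro!: prod.cong)
  thus ?thesis unfolding polar_def by simp
qed

lemma dpolar_expand:
  fixes h x :: "complex^'v::finite"
  shows "dpolar k c x h = (\<Sum>m<k. \<Sum>xs\<in>words k. sym_coeff c xs * (h $ (xs!m) * (\<Prod>j\<in>{..<k}-{m}. x $ (xs!j))))"
  unfolding dpolar_def by (intro sum.cong refl) (simp add: polar_slot)

lemma has_derivative_polar_diag:
  fixes x :: "complex^'v::finite"
  shows "((\<lambda>x. polar k c (\<lambda>_. x)) has_derivative dpolar k c x) (at x)"
proof -
  have monomial: "((\<lambda>x. \<Prod>j<k. x $ (xs!j)) has_derivative
      (\<lambda>h. \<Sum>i<k. h $ (xs!i) * (\<Prod>j\<in>{..<k}-{i}. x $ (xs!j)))) (at x)" for xs :: "'v list"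
    by (rule has_derivative_prod) (rule bounded_linear_imp_has_derivative[OF bounded_linear_vec_nth])
  have "((\<lambda>x. \<Sum>xs\<in>words k. sym_coeff c xs * (\<Prod>j<k. x $ (xs!j))) has_derivative
      (\<lambda>h. \<Sum>xs\<in>words k. sym_coeff c xs * (\<Sum>i<k. h $ (xs!i) * (\<Prod>j\<in>{..<k}-{i}. x $ (xs!j))))) (at x)"
    by (intro has_derivative_sum has_derivative_mult_right monomial)
  moreover have "(\<lambda>h. \<Sum>xs\<in>words k. sym_coeff c xs * (\<Sum>i<k. h $ (xs!i) * (\<Prod>j\<in>{..<k}-{i}. x $ (xs!j))))
      = dpolar k c x"
    by (rule ext) (simp add: dpolar_expand sum_distrib_left sum.swap[of _ "words k"])
  ultimately show ?thesis unfolding polar_def by simp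
qed

lemma dpolar_add: "dpolar k c x (h1 + h2) = dpolar k c x h1 + dpolar k c x h2"
  unfolding dpolar_expand by (simp add: algebra_simps sum.distrib)

lemma dpolar_smult: "dpolar k c x (a *s h) = a * dpolar k c x h"
  unfolding dpolar_expand by (simp add: algebra_simps sum_distrib_left)

lemma dpolar_euler: "dpolar k c x x = of_nat k * polar k c (\<lambda>_. x)"
  unfolding dpolar_def by simp

lemma dpolar_homog: "dpolar k c (a *s x) h = a ^ (k - 1) * dpolar k c x h"
proof -
  have "(\<Prod>j\<in>{..<k}-{m}. (a *s x) $ (xs!j)) = a ^ (k - 1) * (\<Prod>j\<in>{..<k}-{m}. x $ (xs!j))"
    if "m < k" for m and xs :: "'a list"
    using that by (simp add: prod.distrib)
  thus ?thesis unfolding dpolar_expand by (simp add: sum_distrib_left algebra_simps)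
qed

lemma prod_split3:
  fixes g :: "nat \<Rightarrow> 'a::comm_monoid_mult"
  assumes "m < k" "S \<subseteq> {..<k}-{m}"
  shows "(\<Prod>j<k. g j) = g m * (\<Prod>j\<in>S. g j) * (\<Prod>j\<in>({..<k}-{m})-S. g j)"
proof -
  have "(\<Prod>j<k. g j) = g m * (\<Prod>j\<in>{..<k}-{m}. g j)"
    using assms(1) by (subst prod.remove[of "{..<k}" m]) auto
  also have "(\<Prod>j\<in>{..<k}-{m}. g j) = (\<Prod>j\<in>({..<k}-{m})-S. g j) * (\<Prod>j\<in>S. g j)"
    using assms(2) by (intro prod.subset_diff) auto
  finally show ?thesis by (simp add: ac_simps)
qed

definition slot_fill :: "nat \<Rightarrow> 'a \<Rightarrow> 'a \<Rightarrow> 'a \<Rightarrow> nat set \<Rightarrow> nat \<Rightarrow> 'a" where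
  "slot_fill m z e x S = (\<lambda>j. if j = m then z else if j \<in> S then e else x)"

lemma norm_prod_slot_fill:
  assumes "m < k" "S \<subseteq> {..<k}-{m}"
  shows "(\<Prod>j<k. norm (slot_fill m z e x S j))
    = norm z * ((\<Prod>j\<in>S. norm e) * (\<Prod>j\<in>({..<k}-{m})-S. norm x))"
proof -
  have "(\<Prod>j<k. norm (slot_fill m z e x S j)) = norm (slot_fill m z e x S m)
      * (\<Prod>j\<in>S. norm (slot_fill m z e x S j)) * (\<Prod>j\<in>({..<k}-{m})-S. norm (slot_fill m z e x S j))"
    using assms by (intro prod_split3) auto
  also have "(\<Prod>j\<in>S. norm (slot_fill m z e x S j)) = (\<Prod>j\<in>S. norm e)"
    using assms by (intro prod.cong) (auto simp: slot_fill_def)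
  also have "(\<Prod>j\<in>({..<k}-{m})-S. norm (slot_fill m z e x S j)) = (\<Prod>j\<in>({..<k}-{m})-S. norm x)"
    by (intro prod.cong) (auto simp: slot_fill_def)
  finally show ?thesis by (simp add: slot_fill_def ac_simps)
qed

lemma polar_expand:
  fixes z x e :: "complex^'v::finite"
  assumes "m < k"
  shows "polar k c (\<lambda>j. if j = m then z else x + e) = (\<Sum>S\<in>Pow ({..<k}-{m}). polar k c (slot_fill m z e x S))"
proof -
  let ?A = "{..<k}-{m}"
  have "polar k c (\<lambda>j. if j = m then z else x + e)
      = (\<Sum>xs\<in>words k. sym_coeff c xs * (z $ (xs!m) * (\<Prod>j\<in>?A. e $ (xs!j) + x $ (xs!j))))"
    unfolding polar_slot[OF assms] by (simp add: add.commute)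
  also have "\<dots> = (\<Sum>S\<in>Pow ?A. \<Sum>xs\<in>words k.
      sym_coeff c xs * (z $ (xs!m) * ((\<Prod>j\<in>S. e $ (xs!j)) * (\<Prod>j\<in>?A-S. x $ (xs!j)))))"
    by (simp add: prod_add sum_distrib_left sum.swap[of _ "words k"])
  also have "\<dots> = (\<Sum>S\<in>Pow ?A. polar k c (slot_fill m z e x S))"
  proof (intro sum.cong refl)
    fix S assume S: "S \<in> Pow ?A"
    have "(\<Prod>j<k. slot_fill m z e x S j $ (xs!j))
        = z $ (xs!m) * ((\<Prod>j\<in>S. e $ (xs!j)) * (\<Prod>j\<in>?A-S. x $ (xs!j)))" for xs :: "'v list"
    proof -
      have "(\<Prod>j<k. slot_fill m z e x S j $ (xs!j)) = slot_fill m z e x S m $ (xs!m)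
          * (\<Prod>j\<in>S. slot_fill m z e x S j $ (xs!j)) * (\<Prod>j\<in>?A-S. slot_fill m z e x S j $ (xs!j))"
        using S assms by (intro prod_split3) auto
      also have "(\<Prod>j\<in>S. slot_fill m z e x S j $ (xs!j)) = (\<Prod>j\<in>S. e $ (xs!j))"
        using S by (intro prod.cong) (auto simp: slot_fill_def)
      also have "(\<Prod>j\<in>?A-S. slot_fill m z e x S j $ (xs!j)) = (\<Prod>j\<in>?A-S. x $ (xs!j))"
        by (intro prod.cong) (auto simp: slot_fill_def)
      finally show ?thesis by (simp add: slot_fill_def ac_simps)
    qed
    thus "(\<Sum>xs\<in>words k. sym_coeff c xs * (z $ (xs!m) * ((\<Prod>j\<in>S. e $ (xs!j)) * (\<Prod>j\<in>?A-S. x $ (xs!j)))))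
        = polar k c (slot_fill m z e x S)"
      unfolding polar_def by simp
  qed
  finally show ?thesis .
qed

lemma polar_slot_diff_bound:
  fixes z x e :: "complex^'v::finite"
  assumes "m < k"
  shows "cmod (polar k c (\<lambda>j. if j = m then z else x + e) - polar k c (\<lambda>j. if j = m then z else x))
     \<le> bw_comp k c * norm z * ((norm x + norm e) ^ (k - 1) - norm x ^ (k - 1))"
proof -
  let ?A = "{..<k}-{m}"
  let ?term = "\<lambda>S. (\<Prod>j\<in>S. norm e) * (\<Prod>j\<in>?A-S. norm x)"
  have fin: "finite (Pow ?A)" by simp
  have empty_term: "polar k c (slot_fill m z e x {}) = polar k c (\<lambda>j. if j = m then z else x)"
    unfolding slot_fill_def by (rule arg_cong[where f="polar k c"]) auto
  have "cmod (polar k c (\<lambda>j. if j = m then z else x + e) - polar k c (\<lambda>j. if j = m then z else x))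
      = cmod (\<Sum>S\<in>Pow ?A - {{}}. polar k c (slot_fill m z e x S))"
    unfolding polar_expand[OF assms]
    using sum.remove[OF fin, of "{}" "\<lambda>S. polar k c (slot_fill m z e x S)"] empty_term by simp
  also have "\<dots> \<le> (\<Sum>S\<in>Pow ?A - {{}}. cmod (polar k c (slot_fill m z e x S)))"
    by (rule norm_sum)
  also have "\<dots> \<le> (\<Sum>S\<in>Pow ?A - {{}}. bw_comp k c * (norm z * ?term S))"
  proof (rule sum_mono)
    fix S assume "S \<in> Pow ?A - {{}}"
    hence "S \<subseteq> ?A" by simp
    have "cmod (polar k c (slot_fill m z e x S)) \<le> bw_comp k c * (\<Prod>j<k. norm (slot_fill m z e x S j))"
      by (rule polar_bound)
    also have "\<dots> = bw_comp k c * (norm z * ?term S)"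
      by (simp only: norm_prod_slot_fill[OF assms \<open>S \<subseteq> ?A\<close>])
    finally show "cmod (polar k c (slot_fill m z e x S)) \<le> bw_comp k c * (norm z * ?term S)" .
  qed
  also have "\<dots> = bw_comp k c * norm z * ((\<Sum>S\<in>Pow ?A. ?term S) - norm x ^ (k - 1))"
    using sum.remove[OF fin, of "{}" ?term] assms by (simp add: sum_distrib_left ac_simps)
  also have "(\<Sum>S\<in>Pow ?A. ?term S) = (norm x + norm e) ^ (k - 1)"
    using prod_add[of "?A" "\<lambda>_. norm e" "\<lambda>_. norm x"] assms by (simp add: add.commute)
  finally show ?thesis .
qed

lemma dpolar_bound: "cmod (dpolar k c x h) \<le> real k * bw_comp k c * norm x ^ (k - 1) * norm h"
proof -
  have "cmod (polar k c (\<lambda>j. if j = m then h else x)) \<le> bw_comp k c * (norm h * norm x ^ (k - 1))"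
    if "m < k" for m
  proof -
    have "slot_fill m h h x {} = (\<lambda>j. if j = m then h else x)" by (auto simp: slot_fill_def)
    thus ?thesis
      using that polar_bound[of k c "slot_fill m h h x {}"] norm_prod_slot_fill[of m k "{}" h h x]
      by simp
  qed
  hence "cmod (dpolar k c x h) \<le> (\<Sum>m<k. bw_comp k c * (norm h * norm x ^ (k - 1)))"
    unfolding dpolar_def by (intro order_trans[OF norm_sum] sum_mono) auto
  thus ?thesis by (simp add: ac_simps)
qed

lemma dpolar_diff:
  "cmod (dpolar k c (x + e) z - dpolar k c x z)
     \<le> real k * bw_comp k c * norm z * ((norm x + norm e) ^ (k - 1) - norm x ^ (k - 1))"
proof -
  have "cmod (dpolar k c (x + e) z - dpolar k c x z)
      \<le> (\<Sum>m<k. cmod (polar k c (\<lambda>j. if j = m then z else x + e) - polar k c (\<lambda>j. if j = m then z else x)))"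
    unfolding dpolar_def sum_subtractf[symmetric] by (rule norm_sum)
  also have "\<dots> \<le> (\<Sum>m<k. bw_comp k c * norm z * ((norm x + norm e) ^ (k - 1) - norm x ^ (k - 1)))"
    by (intro sum_mono polar_slot_diff_bound) auto
  finally show ?thesis by (simp add: ac_simps)
qed

section \<open>The derivative of the system\<close>

lemma bounded_linear_axis: "bounded_linear (axis i :: complex \<Rightarrow> complex^'n::finite)"
proof -
  have "linear (axis i :: complex \<Rightarrow> complex^'n)"
    by (rule linearI) (auto simp: axis_def vec_eq_iff)
  thus ?thesis by (simp add: linear_conv_bounded_linear)
qed

lemma has_derivative_vec:
  fixes g :: "'n::finite \<Rightarrow> 'a::real_normed_vector \<Rightarrow> complex"
  assumes "\<And>i. (g i has_derivative g' i) (at x)"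
  shows "((\<lambda>x. \<chi> i. g i x) has_derivative (\<lambda>h. \<chi> i. g' i h)) (at x)"
proof -
  have axis_sum: "(\<chi> i. a i) = (\<Sum>i\<in>UNIV. axis i (a i) :: complex^'n)" for a
    by (simp add: vec_eq_iff axis_def sum_component if_distrib sum.delta cong: if_cong)
  have "((\<lambda>x. \<Sum>i\<in>UNIV. axis i (g i x) :: complex^'n) has_derivative (\<lambda>h. \<Sum>i\<in>UNIV. axis i (g' i h))) (at x)"
    by (intro has_derivative_sum bounded_linear.has_derivative[OF bounded_linear_axis] assms)
  thus ?thesis by (simp only: axis_sum)
qed

lemma peval_polar: "peval d f x = (\<chi> i. polar (d i) (f i) (\<lambda>_. x))"
  by (simp add: peval_def polar_diag)

lemma Df_apply: "Df d f x h $ i = dpolar (d i) (f i) x h"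
proof -
  have "(peval d f has_derivative (\<lambda>h. \<chi> i. dpolar (d i) (f i) x h)) (at x)"
    unfolding peval_polar[abs_def] by (intro has_derivative_vec has_derivative_polar_diag)
  hence "Df d f x = (\<lambda>h. \<chi> i. dpolar (d i) (f i) x h)"
    unfolding Df_def by (rule frechet_derivative_at[symmetric])
  thus ?thesis by simp
qed

lemma Df_add: "Df d f x (h1 + h2) = Df d f x h1 + Df d f x h2"
  by (simp add: vec_eq_iff Df_apply dpolar_add)

lemma Df_smult: "Df d f x (a *s h) = a *s Df d f x h"
  by (simp add: vec_eq_iff Df_apply dpolar_smult)

lemma scaleR_as_smult: "r *\<^sub>R (v::complex^'k::finite) = complex_of_real r *s v"
  unfolding vec_eq_iff vector_scaleR_component by (simp add: scaleR_conv_of_real)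

lemma Df_linear: "linear (Df d f x)"
  by (rule linearI) (simp_all add: Df_add Df_smult scaleR_as_smult)

lemma Df_euler: "Df d f x x = (\<chi> i. of_nat (d i) * peval d f x $ i)"
  by (simp add: vec_eq_iff Df_apply dpolar_euler peval_polar)

lemma Df_homog: "Df d f (a *s y) h $ i = a ^ (d i - 1) * Df d f y h $ i"
  by (simp add: Df_apply dpolar_homog)

section \<open>The Hermitian inner product\<close>

lemma hinner_add: "hinner (v + w) x = hinner v x + hinner w x"
  by (simp add: hinner_def algebra_simps sum.distrib)

lemma hinner_diff: "hinner (v - w) x = hinner v x - hinner w x"
  by (simp add: hinner_def algebra_simps sum_subtractf)

lemma hinner_smult: "hinner (a *s v) x = a * hinner v x"
  by (simp add: hinner_def algebra_simps sum_distrib_left)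

lemma hinner_diff_right: "hinner a (b - c) = hinner a b - hinner a c"
  by (simp add: hinner_def algebra_simps sum_subtractf)

lemma hinner_smult_right: "hinner a (c *s b) = cnj c * hinner a b"
  by (simp add: hinner_def algebra_simps sum_distrib_left)

lemma hinner_zero[simp]: "hinner 0 x = 0"
  by (simp add: hinner_def)

lemma hinner_self: "hinner x x = of_real ((norm x)\<^sup>2)"
  unfolding hinner_def norm_vec_sq of_real_sum complex_norm_square ..

lemma norm_sq_hinner: "(norm x)\<^sup>2 = Re (hinner x x)"
  by (simp only: hinner_self Re_complex_of_real)

lemma hinner_cnj: "hinner y x = cnj (hinner x y)"
  by (simp add: hinner_def mult.commute)

lemma hinner_cauchy_schwarz: "cmod (hinner u v) \<le> norm u * norm (v::complex^'k::finite)"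
proof -
  have "cmod (hinner u v) \<le> (\<Sum>j\<in>UNIV. cmod (u $ j) * cmod (v $ j))"
    unfolding hinner_def by (rule order_trans[OF norm_sum]) (simp add: norm_mult)
  also have "\<dots> \<le> norm u * norm v"
    using sum_le_sqrt[of "\<lambda>j. cmod (u $ j)" "\<lambda>j. cmod (v $ j)" UNIV]
    by (simp add: norm_vec_def L2_set_def)
  finally show ?thesis .
qed

lemma norm_smult_vec: "norm (c *s (v::complex^'k::finite)) = cmod c * norm v"
  by (simp add: norm_vec_def L2_set_def norm_mult power_mult_distrib sum_distrib_left[symmetric] real_sqrt_mult)

lemma norm_diff_sq: "(norm (a - b))\<^sup>2 = (norm a)\<^sup>2 + (norm b)\<^sup>2 - 2 * Re (hinner a b)"
proof -
  have "hinner (a - b) (a - b) = hinner a a + hinner b b - (hinner a b + cnj (hinner a b))"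
    by (simp add: hinner_diff hinner_diff_right hinner_cnj[of b a])
  hence "Re (hinner (a - b) (a - b)) = Re (hinner a a) + Re (hinner b b) - 2 * Re (hinner a b)"
    by simp
  thus ?thesis by (simp only: norm_sq_hinner)
qed

lemma subspace_hperp: "subspace (hperp x)"
  unfolding subspace_def hperp_def by (auto simp: hinner_add hinner_smult scaleR_as_smult)

section \<open>The inverse of Df(x) restricted to x-perp\<close>

lemma Df_hperp_surj:
  assumes "crank (Df d f x) (hperp x) = CARD('n)"
  shows "Df d f x ` hperp x = (UNIV :: (complex^'n::finite) set)"
proof -
  let ?L = "Df d f x"
  have sub: "subspace (?L ` hperp x)"
    by (rule linear_subspace_image[OF Df_linear subspace_hperp])
  have "dim (?L ` hperp x) \<le> DIM(complex^'n)" by (rule dim_subset_UNIV)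
  moreover have "dim (?L ` hperp x) div 2 = CARD('n)" using assms by (simp add: crank_def)
  ultimately have "dim (?L ` hperp x) = DIM(complex^'n)" by simp
  hence "span (?L ` hperp x) = UNIV" using dim_eq_full[of "?L ` hperp x"] by (simp only:)
  thus ?thesis using sub by (metis span_eq_iff)
qed

text \<open>If Df(x) maps x-perp onto C^n then it is injective there: the map
  v \<mapsto> (<v,x>, Df(x) v) from C^(n+1) to C^(n+1) is a linear surjection, hence injective.\<close>
lemma restr_invertible_if_surj:
  fixes x :: "complex^'n::finite option"
  assumes x: "x \<noteq> 0" and surj: "Df d f x ` hperp x = UNIV"
  shows "restr_invertible d f x"
proof -
  let ?L = "Df d f x"
  define nx where "nx = complex_of_real ((norm x)\<^sup>2)"
  have nx0: "nx \<noteq> 0" using x by (simp add: nx_def)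
  define Phi where "Phi v = (\<chi> j. case j of None \<Rightarrow> hinner v x | Some i \<Rightarrow> ?L v $ i)" for v
  have linPhi: "linear Phi"
  proof (rule linearI)
    show "Phi (b1 + b2) = Phi b1 + Phi b2" for b1 b2
      by (simp add: Phi_def vec_eq_iff Df_add hinner_add split: option.splits)
    show "Phi (r *\<^sub>R b) = r *\<^sub>R Phi b" for r b
      by (simp add: Phi_def vec_eq_iff scaleR_as_smult Df_smult hinner_smult split: option.splits)
  qed
  have "\<exists>v. Phi v = t" for t
  proof -
    have "(\<chi> i. t $ Some i) - (t $ None / nx) *s ?L x \<in> ?L ` hperp x" using surj by simp
    then obtain w where w: "w \<in> hperp x" "?L w = (\<chi> i. t $ Some i) - (t $ None / nx) *s ?L x"
      by (elim imageE) simp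
    let ?v = "w + (t $ None / nx) *s x"
    have "hinner ?v x = t $ None"
      using w(1) nx0 by (simp add: hinner_add hinner_smult hinner_self hperp_def nx_def)
    moreover have "?L ?v = (\<chi> i. t $ Some i)" using w(2) by (simp add: Df_add Df_smult)
    ultimately have "Phi ?v = t" by (simp add: Phi_def vec_eq_iff split: option.splits)
    thus ?thesis by blast
  qed
  hence "surj Phi" by (metis surj_def)
  hence "inj Phi" using linear_surjective_imp_injective[OF linPhi] by simp
  have "inj_on ?L (hperp x)"
  proof (rule inj_onI)
    fix v w assume "v \<in> hperp x" "w \<in> hperp x" "?L v = ?L w"
    hence "Phi v = Phi w" by (simp add: Phi_def hperp_def vec_eq_iff split: option.splits)
    thus "v = w" using \<open>inj Phi\<close> by (simp add: inj_def)
  qed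
  thus ?thesis unfolding restr_invertible_def bij_betw_def using surj by simp
qed

lemma restr_inv_in:
  assumes "restr_invertible d f x"
  shows "restr_inv d f x v \<in> hperp x" "Df d f x (restr_inv d f x v) = v"
  using assms unfolding restr_invertible_def restr_inv_def bij_betw_def
  by (auto intro: inv_into_into f_inv_into_f)

lemma restr_inv_Df:
  assumes "restr_invertible d f x" "w \<in> hperp x"
  shows "restr_inv d f x (Df d f x w) = w"
  using assms unfolding restr_invertible_def restr_inv_def bij_betw_def
  by (auto intro: inv_into_f_f)

lemma restr_inv_add:
  assumes "restr_invertible d f x"
  shows "restr_inv d f x (a + b) = restr_inv d f x a + restr_inv d f x b"
proof -
  have "restr_inv d f x a + restr_inv d f x b \<in> hperp x"
    using restr_inv_in(1)[OF assms] by (intro subspace_add[OF subspace_hperp])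
  hence "restr_inv d f x (Df d f x (restr_inv d f x a + restr_inv d f x b))
      = restr_inv d f x a + restr_inv d f x b"
    by (rule restr_inv_Df[OF assms])
  thus ?thesis by (simp add: Df_add restr_inv_in(2)[OF assms])
qed

lemma restr_inv_smult:
  assumes "restr_invertible d f x"
  shows "restr_inv d f x (c *s a) = c *s restr_inv d f x a"
proof -
  have "c *s restr_inv d f x a \<in> hperp x"
    using restr_inv_in(1)[OF assms] by (simp add: hperp_def hinner_smult)
  hence "restr_inv d f x (Df d f x (c *s restr_inv d f x a)) = c *s restr_inv d f x a"
    by (rule restr_inv_Df[OF assms])
  thus ?thesis by (simp add: Df_smult restr_inv_in(2)[OF assms])
qed

lemma linear_restr_inv:
  assumes "restr_invertible d f x"
  shows "linear (restr_inv d f x)"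
  by (rule linearI) (simp_all add: restr_inv_add[OF assms] restr_inv_smult[OF assms] scaleR_as_smult)

text \<open>Invertibility forces every degree to be positive (a constant row has zero derivative).\<close>
lemma restr_invertible_deg_pos:
  assumes "restr_invertible d f x"
  shows "1 \<le> d i"
proof (rule ccontr)
  assume "\<not> 1 \<le> d i"
  hence "d i = 0" by simp
  hence "Df d f x w $ i = 0" for w by (simp add: Df_apply dpolar_def)
  moreover have "Df d f x (restr_inv d f x (axis i 1)) $ i = 1"
    using restr_inv_in[OF assms] by simp
  ultimately show False by simp
qed

section \<open>The normalized inverse and the condition number\<close>

definition scale_diag :: "('n::finite \<Rightarrow> nat) \<Rightarrow> complex^'m::finite \<Rightarrow> complex^'n \<Rightarrow> complex^'n" where
  "scale_diag d x w = (\<chi> i. complex_of_real (sqrt (real (d i)) * norm x powr (real (d i) - 1)) * w $ i)"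

definition diag_weight :: "('n \<Rightarrow> nat) \<Rightarrow> complex^'m::finite \<Rightarrow> 'n \<Rightarrow> real" where
  "diag_weight d x i = sqrt (real (d i)) * norm x ^ (d i - 1)"

definition unscale_diag :: "('n::finite \<Rightarrow> nat) \<Rightarrow> complex^'m::finite \<Rightarrow> complex^'n \<Rightarrow> complex^'n" where
  "unscale_diag d x q = (\<chi> i. q $ i / complex_of_real (diag_weight d x i))"

lemma linear_scale_diag: "linear (scale_diag d x)"
  by (rule linearI) (simp_all add: scale_diag_def vec_eq_iff algebra_simps scaleR_conv_of_real)

lemma diag_weight_pos: "x \<noteq> 0 \<Longrightarrow> 1 \<le> d i \<Longrightarrow> diag_weight d x i > 0"
  by (simp add: diag_weight_def)

lemma scale_diag_nth:
  assumes "x \<noteq> 0" "1 \<le> d i"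
  shows "scale_diag d x w $ i = complex_of_real (diag_weight d x i) * w $ i"
proof -
  have exponent: "real (d i) - 1 = real (d i - 1)" using assms(2) by linarith
  have "norm x powr (real (d i) - 1) = norm x ^ (d i - 1)"
    unfolding exponent by (rule powr_realpow) (use assms(1) in simp)
  thus ?thesis by (simp add: scale_diag_def diag_weight_def)
qed

lemma scale_unscale_diag:
  assumes "x \<noteq> 0" "\<And>i. 1 \<le> d i"
  shows "scale_diag d x (unscale_diag d x q) = q"
proof -
  have "complex_of_real (diag_weight d x i) \<noteq> 0" for i
    using diag_weight_pos[of x d i] assms by simp
  thus ?thesis using assms by (simp add: vec_eq_iff scale_diag_nth unscale_diag_def)
qed

definition inv_norm :: "('n::finite \<Rightarrow> nat) \<Rightarrow> ('n \<Rightarrow> ('n option \<Rightarrow> nat) \<Rightarrow> complex)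
    \<Rightarrow> complex^'n option \<Rightarrow> real" where
  "inv_norm d f x = onorm (\<lambda>w. restr_inv d f x (scale_diag d x w))"

lemma mu_eq:
  "restr_invertible d f x \<Longrightarrow> mu d f x = ereal (bw_norm d f * inv_norm d f x)"
  by (simp add: mu_def inv_norm_def scale_diag_def)

lemma bounded_linear_normalized_inverse:
  assumes "restr_invertible d f x"
  shows "bounded_linear (\<lambda>w. restr_inv d f x (scale_diag d x w))"
  using linear_compose[OF linear_scale_diag linear_restr_inv[OF assms]]
  by (simp add: linear_conv_bounded_linear o_def)

lemma inv_norm_bound:
  "restr_invertible d f x \<Longrightarrow> norm (restr_inv d f x (scale_diag d x v)) \<le> inv_norm d f x * norm v"
  unfolding inv_norm_def by (rule onorm[OF bounded_linear_normalized_inverse])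

lemma inv_norm_nonneg: "restr_invertible d f x \<Longrightarrow> 0 \<le> inv_norm d f x"
  unfolding inv_norm_def by (rule onorm_pos_le[OF bounded_linear_normalized_inverse])

lemma bw_norm_eq: "bw_norm d f = sqrt (\<Sum>i\<in>UNIV. (bw_comp (d i) (f i))\<^sup>2)"
  by (simp add: bw_norm_def bw_comp_sq)

lemma bw_norm_nonneg: "bw_norm d f \<ge> 0"
  by (simp add: bw_norm_eq sum_nonneg)

section \<open>Geometry of the Fubini-Study distance\<close>

definition cos_angle :: "complex^'v::finite \<Rightarrow> complex^'v \<Rightarrow> real" where
  "cos_angle x y = cmod (hinner x y) / (norm x * norm y)"

lemma cos_angle_bounds:
  assumes "x \<noteq> 0" "y \<noteq> 0"
  shows "0 \<le> cos_angle x y" "cos_angle x y \<le> 1"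
  using hinner_cauchy_schwarz[of x y] assms by (auto simp: cos_angle_def field_simps)

lemma dR_props:
  assumes "x \<noteq> 0" "y \<noteq> 0"
  shows "cos (dR x y) = cos_angle x y" "sin (dR x y) = sqrt (1 - (cos_angle x y)\<^sup>2)"
    "0 \<le> dR x y" "dR x y \<le> pi/2"
  using cos_angle_bounds[OF assms] arccos_le_pi2[of "cos_angle x y"]
  by (auto simp: dR_def cos_angle_def[symmetric] sin_arccos arccos_lbound)

text \<open>For z orthogonal to y, the component of z along x is at most ||z|| ||x|| sin dR(x,y):
  only the part of x orthogonal to y, of norm ||x|| sin dR(x,y), contributes.\<close>
lemma hperp_component_bound:
  fixes x y z :: "complex^'v::finite"
  assumes x: "x \<noteq> 0" and y: "y \<noteq> 0" and z: "z \<in> hperp y"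
  shows "cmod (hinner z x) \<le> norm z * (norm x * sin (dR x y))"
proof -
  define h where "h = hinner x y"
  define Y2 where "Y2 = complex_of_real ((norm y)\<^sup>2)"
  have Y20: "Y2 \<noteq> 0" using y by (simp add: Y2_def)
  define xp where "xp = x - (h / Y2) *s y"
  have zy: "hinner z y = 0" using z by (simp add: hperp_def)
  have z_xp: "hinner z x = hinner z xp"
    by (simp add: xp_def hinner_diff_right hinner_smult_right zy)
  have xpy: "hinner xp y = 0"
    using Y20 by (simp add: xp_def hinner_diff hinner_smult hinner_self Y2_def h_def)
  have "hinner xp xp = hinner xp x - cnj (h / Y2) * hinner xp y"
    by (subst (2) xp_def) (simp only: hinner_diff_right hinner_smult_right)
  also have "\<dots> = hinner xp x" by (simp add: xpy)
  also have "\<dots> = hinner x x - (h * cnj h) / Y2"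
    by (simp add: xp_def hinner_diff hinner_smult hinner_cnj[of y x] h_def)
  also have "\<dots> = complex_of_real ((norm x)\<^sup>2 - (cmod h)\<^sup>2 / (norm y)\<^sup>2)"
    by (simp add: complex_norm_square[symmetric] hinner_self Y2_def)
  finally have "(norm xp)\<^sup>2 = (norm x)\<^sup>2 - (cmod h)\<^sup>2 / (norm y)\<^sup>2"
    by (simp add: norm_sq_hinner)
  also have "\<dots> = (norm x * sin (dR x y))\<^sup>2"
  proof -
    have "1 - (cos_angle x y)\<^sup>2 \<ge> 0" using cos_angle_bounds[OF x y] by (simp add: abs_square_le_1)
    hence "(norm x * sin (dR x y))\<^sup>2 = (norm x)\<^sup>2 * (1 - (cos_angle x y)\<^sup>2)"
      by (simp add: dR_props[OF x y] power_mult_distrib)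
    also have "\<dots> = (norm x)\<^sup>2 - (cmod h)\<^sup>2 / (norm y)\<^sup>2"
      using x y by (simp add: cos_angle_def h_def field_simps power2_eq_square)
    finally show ?thesis by simp
  qed
  finally have "norm xp = norm x * sin (dR x y)"
    using dR_props(3,4)[OF x y] by (simp add: sin_ge_zero power2_eq_iff_nonneg)
  thus ?thesis using z_xp hinner_cauchy_schwarz[of z xp] by simp
qed

text \<open>Rescaling y by a suitable c with |c| = ||x||/||y|| (aligning its phase with x) gives
  a point within ||x|| dR(x,y) of x: the chord is shorter than the arc.\<close>
lemma rescaling_close:
  fixes x y :: "complex^'v::finite"
  assumes x: "x \<noteq> 0" and y: "y \<noteq> 0"
  obtains c where "cmod c = norm x / norm y" "norm (c *s y - x) \<le> norm x * dR x y"
proof -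
  define h where "h = hinner x y"
  define p where "p = (if h = 0 then 1 else h / complex_of_real (cmod h))"
  define c where "c = p * complex_of_real (norm x / norm y)"
  have p1: "cmod p = 1" by (simp add: p_def norm_divide)
  have cn: "cmod c = norm x / norm y" unfolding c_def norm_mult p1 norm_of_real by simp
  have pcnj: "p * cnj h = complex_of_real (cmod h)"
  proof (cases "h = 0")
    case True then show ?thesis by (simp add: p_def)
  next
    case False
    then have "p * cnj h = (h * cnj h) / complex_of_real (cmod h)" by (simp add: p_def)
    also have "\<dots> = complex_of_real (cmod h)"
      using False by (simp add: complex_norm_square[symmetric] power2_eq_square)
    finally show ?thesis .
  qed
  have ny: "norm (c *s y) = norm x" using cn y by (simp add: norm_smult_vec)
  have "hinner (c *s y) x = c * cnj h" by (simp add: hinner_smult hinner_cnj[of y x] h_def)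
  also have "\<dots> = complex_of_real (cmod h * (norm x / norm y))"
    by (simp add: c_def pcnj[symmetric] ac_simps)
  finally have "Re (hinner (c *s y) x) = cmod h * (norm x / norm y)"
    by (simp only: Re_complex_of_real)
  hence hr: "Re (hinner (c *s y) x) = (norm x)\<^sup>2 * cos_angle x y"
    using x y by (simp add: cos_angle_def h_def power2_eq_square field_simps)
  define r where "r = dR x y"
  have r0: "0 \<le> r" "r \<le> pi / 2" using dR_props[OF x y] by (auto simp: r_def)
  have "(norm (c *s y - x))\<^sup>2 = 2 * (norm x)\<^sup>2 * (1 - cos r)"
    by (simp add: norm_diff_sq ny hr dR_props(1)[OF x y] r_def algebra_simps)
  also have "1 - cos r = 2 * (sin (r / 2))\<^sup>2"
    using cos_double_sin[of "r/2"] by simp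
  also have "(sin (r / 2))\<^sup>2 \<le> (r / 2)\<^sup>2"
    using r0 by (intro power_mono sin_x_le_x sin_ge_zero) auto
  hence "2 * (norm x)\<^sup>2 * (2 * (sin (r / 2))\<^sup>2) \<le> 2 * (norm x)\<^sup>2 * (2 * (r / 2)\<^sup>2)"
    by (intro mult_left_mono) auto
  finally have "(norm (c *s y - x))\<^sup>2 \<le> (norm x * r)\<^sup>2"
    by (simp add: power_mult_distrib power2_eq_square ac_simps)
  hence "norm (c *s y - x) \<le> norm x * r"
    by (rule power2_le_imp_le) (simp add: r0(1))
  thus ?thesis using that cn r_def by blast
qed

section \<open>Scalar inequalities\<close>

lemma scaled_power_increment:
  fixes a r :: real
  assumes "a \<ge> 1" "r \<ge> 0"
  shows "a * ((1 + r) ^ m - 1) \<le> (1 + a * r) ^ m - 1"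
proof (induction m)
  case 0 then show ?case by simp
next
  case (Suc m)
  have IH: "a * (1 + r) ^ m - a + 1 \<le> (1 + a * r) ^ m" using Suc.IH by (simp add: right_diff_distrib)
  have "(1 + a * r) * (a * (1 + r) ^ m - a + 1) - (a * (1 + r) ^ Suc m - a + 1)
      = a * r * (a - 1) * ((1 + r) ^ m - 1)"
    by (simp add: algebra_simps)
  moreover have "(1 + r) ^ m \<ge> 1" using assms by simp
  ultimately have "a * (1 + r) ^ Suc m - a + 1 \<le> (1 + a * r) * (a * (1 + r) ^ m - a + 1)"
    using assms by (smt (verit) mult_nonneg_nonneg)
  also have "\<dots> \<le> (1 + a * r) ^ Suc m"
    using mult_left_mono[OF IH, of "1 + a * r"] assms by simp
  finally show ?case by (simp add: algebra_simps)
qed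

text \<open>The relative variation of the i-th scaled row: degree k <= D only enters via sqrt k
  and the exponent k - 1, both monotone in k.\<close>
lemma relative_increment_bound:
  fixes B Z X t :: real
  assumes k: "1 \<le> k" "k \<le> D" and X: "X > 0" and t: "t \<ge> 0" and BZ: "B \<ge> 0" "Z \<ge> 0"
  shows "real k * B * Z * ((X + t) ^ (k - 1) - X ^ (k - 1)) / (sqrt k * X ^ (k - 1))
     \<le> Z * (sqrt D * ((1 + t / X) ^ (D - 1) - 1)) * B"
proof -
  have "X + t = X * (1 + t / X)" using X by (simp add: field_simps)
  hence factor: "(X + t) ^ (k - 1) - X ^ (k - 1) = X ^ (k - 1) * ((1 + t / X) ^ (k - 1) - 1)"
    by (simp add: power_mult_distrib right_diff_distrib)
  have cancel: "P \<noteq> 0 \<Longrightarrow> q \<noteq> 0 \<Longrightarrow> a * B * Z * (P * F) / (q * P) = (a / q) * F * (Z * B)"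
    for a q P F :: real
    by (simp add: field_simps)
  have "real k * B * Z * ((X + t) ^ (k - 1) - X ^ (k - 1)) / (sqrt k * X ^ (k - 1))
      = (real k / sqrt k) * ((1 + t / X) ^ (k - 1) - 1) * (Z * B)"
    unfolding factor using X k by (intro cancel) auto
  also have "\<dots> = sqrt k * ((1 + t / X) ^ (k - 1) - 1) * (Z * B)" by (simp add: real_div_sqrt)
  also have "\<dots> \<le> sqrt D * ((1 + t / X) ^ (D - 1) - 1) * (Z * B)"
  proof (intro mult_right_mono mult_mono)
    have "1 \<le> 1 + t / X" using X t by simp
    thus "(1 + t / X) ^ (k - 1) - 1 \<le> (1 + t / X) ^ (D - 1) - 1"
      using k by (simp add: power_increasing)
    show "0 \<le> (1 + t / X) ^ (k - 1) - 1" using X t by simp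
  qed (use k BZ in auto)
  finally show ?thesis by (simp add: ac_simps)
qed

text \<open>The final scalar estimate: with a = sqrt(D) mu >= 1 and u = D^(3/2)/2 mu r < 1,
  1 + a ((1+s)^(D-1) - 1) <= (1 + a r)^(D-1) <= exp(2u) <= 1/(1-u)^2 for 0 <= s <= r.\<close>
lemma growth_factor_bound:
  fixes D :: nat and mu r s :: real
  assumes mu: "sqrt D * mu \<ge> 1" and s: "0 \<le> s" "s \<le> r"
    and u: "real D powr (3/2) / 2 * mu * r < 1"
  shows "1 + mu * sqrt D * ((1 + s) ^ (D - 1) - 1) \<le> 1 / (1 - real D powr (3/2) / 2 * mu * r)\<^sup>2"
proof -
  define a where "a = sqrt D * mu"
  define u where "u = real D powr (3/2) / 2 * mu * r"
  have a1: "a \<ge> 1" using mu by (simp add: a_def)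
  have r0: "r \<ge> 0" using s by simp
  have "real D powr (3/2) = real D powr (1 + 1/2)" by simp
  also have "\<dots> = real D powr 1 * real D powr (1/2)" by (rule powr_add)
  finally have u_eq: "u = real D * a * r / 2" by (simp add: u_def a_def powr_half_sqrt)
  have u0: "u \<ge> 0" unfolding u_eq using a1 r0 by simp
  have u1: "u < 1" using u by (simp add: u_def)
  have "a * ((1 + s) ^ (D - 1) - 1) \<le> a * ((1 + r) ^ (D - 1) - 1)"
    using s a1 by (intro mult_left_mono diff_right_mono power_mono) auto
  also have "\<dots> \<le> (1 + a * r) ^ (D - 1) - 1" by (rule scaled_power_increment[OF a1 r0])
  also have "(1 + a * r) ^ (D - 1) \<le> (1 + a * r) ^ D"
    using a1 r0 by (intro power_increasing) auto
  also have "\<dots> \<le> exp (a * r) ^ D"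
    using a1 r0 by (intro power_mono) (auto simp: exp_ge_add_one_self add.commute)
  also have "\<dots> = exp (2 * u)" by (simp add: exp_of_nat_mult[symmetric] u_eq)
  finally have growth: "1 + a * ((1 + s) ^ (D - 1) - 1) \<le> exp (2 * u)" by simp
  have "(1 - u)\<^sup>2 \<le> (exp (- u))\<^sup>2"
    using exp_ge_add_one_self[of "-u"] u1 by (intro power_mono) auto
  hence "exp (2 * u) * (1 - u)\<^sup>2 \<le> 1"
    using mult_left_mono[of "(1 - u)\<^sup>2" "(exp (- u))\<^sup>2" "exp (2 * u)"]
    by (simp add: power2_eq_square exp_add[symmetric])
  hence "exp (2 * u) \<le> 1 / (1 - u)\<^sup>2" using u1 by (simp add: field_simps)
  with growth show ?thesis by (simp add: a_def u_def mult.commute)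
qed

section \<open>The main estimate\<close>

lemma norm_vec_le_componentwise:
  fixes q :: "complex^'k::finite"
  assumes "\<And>i. cmod (q $ i) \<le> K * b i" "K \<ge> 0"
  shows "norm q \<le> K * sqrt (\<Sum>i\<in>UNIV. (b i)\<^sup>2)"
proof -
  have "(norm q)\<^sup>2 \<le> (\<Sum>i\<in>UNIV. (K * b i)\<^sup>2)"
    unfolding norm_vec_sq by (intro sum_mono power_mono assms) auto
  also have "\<dots> = (K * sqrt (\<Sum>i\<in>UNIV. (b i)\<^sup>2))\<^sup>2"
    using assms(2) by (simp add: power_mult_distrib sum_distrib_left[symmetric] sum_nonneg)
  finally have "(norm q)\<^sup>2 \<le> (K * sqrt (\<Sum>i\<in>UNIV. (b i)\<^sup>2))\<^sup>2" .
  moreover have "0 \<le> K * sqrt (\<Sum>i\<in>UNIV. (b i)\<^sup>2)"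
    using assms(2) by (simp add: sum_nonneg)
  ultimately show ?thesis by (rule power2_le_imp_le)
qed

lemma norm_unscale_Df:
  assumes x: "x \<noteq> 0" and deg: "\<And>i. 1 \<le> d i" and degD: "\<And>i. d i \<le> D"
  shows "norm (unscale_diag d x (Df d f x w)) \<le> sqrt D * norm w * bw_norm d f"
proof -
  have "cmod (unscale_diag d x (Df d f x w) $ i) \<le> (sqrt D * norm w) * bw_comp (d i) (f i)" for i
  proof -
    have pos: "diag_weight d x i > 0" by (rule diag_weight_pos[of x d i, OF x deg])
    have "cmod (unscale_diag d x (Df d f x w) $ i) = cmod (Df d f x w $ i) / diag_weight d x i"
      using pos by (simp add: unscale_diag_def norm_divide)
    also have "\<dots> \<le> real (d i) * bw_comp (d i) (f i) * norm x ^ (d i - 1) * norm w / diag_weight d x i"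
      using dpolar_bound pos by (intro divide_right_mono) (simp_all add: Df_apply)
    also have "\<dots> = (real (d i) / sqrt (real (d i))) * bw_comp (d i) (f i) * norm w"
      using x pos by (simp add: diag_weight_def field_simps)
    also have "\<dots> \<le> sqrt D * bw_comp (d i) (f i) * norm w"
      using degD[of i] bw_comp_nonneg[of "d i" "f i"] by (intro mult_right_mono) (auto simp: real_div_sqrt)
    finally show ?thesis by (simp add: ac_simps)
  qed
  thus ?thesis
    using norm_vec_le_componentwise[of _ "sqrt D * norm w" "\<lambda>i. bw_comp (d i) (f i)"]
    by (simp add: bw_norm_eq)
qed

lemma norm_unscale_Df_diff:
  assumes x: "x \<noteq> 0" and deg: "\<And>i. 1 \<le> d i" and degD: "\<And>i. d i \<le> D"
  shows "norm (unscale_diag d x (Df d f (x + e) z - Df d f x z))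
    \<le> norm z * (sqrt D * ((1 + norm e / norm x) ^ (D - 1) - 1)) * bw_norm d f"
proof -
  define G where "G = sqrt D * ((1 + norm e / norm x) ^ (D - 1) - 1)"
  have G0: "G \<ge> 0" by (simp add: G_def)
  have "cmod (unscale_diag d x (Df d f (x + e) z - Df d f x z) $ i) \<le> (norm z * G) * bw_comp (d i) (f i)"
    for i
  proof -
    have pos: "diag_weight d x i > 0" by (rule diag_weight_pos[of x d i, OF x deg])
    have "cmod (unscale_diag d x (Df d f (x + e) z - Df d f x z) $ i)
        = cmod (Df d f (x + e) z $ i - Df d f x z $ i) / diag_weight d x i"
      using pos by (simp add: unscale_diag_def norm_divide)
    also have "\<dots> \<le> real (d i) * bw_comp (d i) (f i) * norm z
        * ((norm x + norm e) ^ (d i - 1) - norm x ^ (d i - 1)) / diag_weight d x i"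
      using dpolar_diff pos by (intro divide_right_mono) (simp_all add: Df_apply)
    also have "\<dots> \<le> norm z * G * bw_comp (d i) (f i)"
      unfolding diag_weight_def G_def
      by (rule relative_increment_bound[OF deg degD]) (simp_all add: x bw_comp_nonneg)
    finally show ?thesis .
  qed
  thus ?thesis
    using norm_vec_le_componentwise[of _ "norm z * G" "\<lambda>i. bw_comp (d i) (f i)"] G0
    by (simp add: bw_norm_eq G_def)
qed

text \<open>The condition number is never small: sqrt(D) mu(f,x) >= 1, witnessed by the preimage
  of a unit coordinate vector.\<close>
lemma inv_norm_lower_bound:
  fixes d :: "'n::finite \<Rightarrow> nat"
  assumes ix: "restr_invertible d f x" and x: "x \<noteq> 0" and degD: "\<And>i. d i \<le> D"
  shows "1 \<le> sqrt D * (bw_norm d f * inv_norm d f x)"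
proof -
  have deg: "\<And>i. 1 \<le> d i" using restr_invertible_deg_pos[OF ix] .
  fix i0 :: 'n
  define w where "w = restr_inv d f x (axis i0 1)"
  have w: "w \<in> hperp x" "Df d f x w = axis i0 1" using restr_inv_in[OF ix] by (simp_all add: w_def)
  have "w \<noteq> 0"
  proof
    assume "w = 0"
    have "axis i0 (1::complex) = Df d f x 0" using w(2) \<open>w = 0\<close> by simp
    also have "\<dots> = 0" by (rule linear_0[OF Df_linear])
    finally have "axis i0 (1::complex) $ i0 = 0" by simp
    thus False by simp
  qed
  define q where "q = unscale_diag d x (Df d f x w)"
  have "w = restr_inv d f x (scale_diag d x q)"
    by (simp add: q_def scale_unscale_diag[OF x deg] restr_inv_Df[OF ix w(1)])
  hence "norm w \<le> inv_norm d f x * norm q" using inv_norm_bound[OF ix] by metis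
  also have "\<dots> \<le> inv_norm d f x * (sqrt D * norm w * bw_norm d f)"
    using norm_unscale_Df[OF x deg degD] inv_norm_nonneg[OF ix] by (intro mult_left_mono) (simp_all add: q_def)
  finally have "norm w * 1 \<le> norm w * (sqrt D * (bw_norm d f * inv_norm d f x))" by (simp add: ac_simps)
  thus ?thesis using \<open>w \<noteq> 0\<close> by (simp add: mult_le_cancel_left)
qed

text \<open>Transporting the normalized inverse from y to the rescaled point c y, |c| = ||x||/||y||:
  by homogeneity of Df every diag_x v has a preimage z in y-perp with ||z|| <= M(y) ||v||.\<close>
lemma rescaled_preimage:
  assumes iy: "restr_invertible d f y" and x: "x \<noteq> 0" and y: "y \<noteq> 0"
    and deg: "\<And>i. 1 \<le> d i" and c: "cmod c = norm x / norm y"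
  obtains z where "z \<in> hperp y" "Df d f (c *s y) z = scale_diag d x v"
    "norm z \<le> inv_norm d f y * norm v"
proof -
  define q0 where "q0 = complex_of_real (norm x) / (complex_of_real (norm y) * c)"
  have c0: "c \<noteq> 0" using c x y by auto
  have q01: "cmod q0 = 1" using c x y by (simp add: q0_def norm_divide norm_mult)
  have cq: "c * complex_of_real (norm y) * q0 = complex_of_real (norm x)"
    using c0 y by (simp add: q0_def)
  define v' where "v' = (\<chi> i. q0 ^ (d i - 1) * v $ i)"
  have nv': "norm v' = norm v"
    unfolding norm_vec_def L2_set_def by (simp add: v'_def norm_mult norm_power q01)
  define z where "z = restr_inv d f y (scale_diag d y v')"
  have z: "z \<in> hperp y" "Df d f y z = scale_diag d y v'"
    using restr_inv_in[OF iy] by (simp_all add: z_def)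
  have "Df d f (c *s y) z $ i = scale_diag d x v $ i" for i
  proof -
    have "Df d f (c *s y) z $ i = c ^ (d i - 1) * (scale_diag d y v' $ i)"
      by (simp add: Df_homog z(2))
    also have "\<dots> = c ^ (d i - 1) * (complex_of_real (sqrt (real (d i)) * norm y ^ (d i - 1))
        * (q0 ^ (d i - 1) * v $ i))"
      by (simp add: scale_diag_nth[OF y deg] diag_weight_def v'_def)
    also have "\<dots> = complex_of_real (sqrt (real (d i)))
        * (c * complex_of_real (norm y) * q0) ^ (d i - 1) * v $ i"
      by (simp add: power_mult_distrib ac_simps)
    also have "\<dots> = scale_diag d x v $ i"
      unfolding cq by (simp add: scale_diag_nth[OF x deg] diag_weight_def)
    finally show ?thesis .
  qed
  hence "Df d f (c *s y) z = scale_diag d x v" by (simp add: vec_eq_iff)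
  moreover have "norm z \<le> inv_norm d f y * norm v"
    using inv_norm_bound[OF iy, of v'] nv' by (simp add: z_def)
  ultimately show ?thesis using that z(1) by blast
qed

text \<open>For z orthogonal to y, the inverse at x of Df(x) z has norm at most
  ||z|| (1 + sin dR(x,y) delta(f,x)): split z into its part in x-perp, which is fixed,
  and its component along x, which is small and mapped via Euler's identity.\<close>
lemma restr_inv_Df_hperp_bound:
  assumes ix: "restr_invertible d f x" and x: "x \<noteq> 0" and y: "y \<noteq> 0" and z: "z \<in> hperp y"
  shows "norm (restr_inv d f x (Df d f x z)) \<le> norm z * (1 + sin (dR x y) * delta d f x)"
proof -
  define L where "L = restr_inv d f x"
  define a where "a = hinner z x / complex_of_real ((norm x)\<^sup>2)"
  define p where "p = z - a *s x"
  have p: "p \<in> hperp x"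
    using x by (simp add: hperp_def p_def a_def hinner_diff hinner_smult hinner_self)
  have "Df d f x z = Df d f x (p + a *s x)" by (simp add: p_def)
  also have "\<dots> = Df d f x p + a *s Df d f x x" by (simp add: Df_add Df_smult)
  finally have decomp: "L (Df d f x z) = p + a *s L (Df d f x x)"
    by (simp add: L_def restr_inv_add[OF ix] restr_inv_smult[OF ix] restr_inv_Df[OF ix p])
  have "norm p \<le> norm z"
  proof -
    have "hinner p p = hinner p z - cnj a * hinner p x"
      by (subst (2) p_def) (simp only: hinner_diff_right hinner_smult_right)
    hence "(norm p)\<^sup>2 = Re (hinner p z)" using p by (simp add: hperp_def norm_sq_hinner)
    also have "\<dots> \<le> norm p * norm z"
      using hinner_cauchy_schwarz[of p z] complex_Re_le_cmod[of "hinner p z"] by linarith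
    finally have "norm p * norm p \<le> norm p * norm z" by (simp add: power2_eq_square)
    thus ?thesis by (cases "norm p = 0") (auto simp: mult_le_cancel_left)
  qed
  have "cmod a \<le> norm z * sin (dR x y) / norm x"
  proof -
    have "cmod a = cmod (hinner z x) / (norm x)\<^sup>2" unfolding a_def norm_divide norm_of_real by simp
    also have "\<dots> \<le> norm z * (norm x * sin (dR x y)) / (norm x)\<^sup>2"
      using hperp_component_bound[OF x y z] by (simp add: divide_right_mono)
    finally show ?thesis using x by (simp add: power2_eq_square)
  qed
  have "norm (L (Df d f x x)) = norm x * delta d f x"
    using x by (simp add: L_def delta_def Df_euler)
  hence "norm (a *s L (Df d f x x)) = cmod a * (norm x * delta d f x)"
    by (simp add: norm_smult_vec)
  also have "\<dots> \<le> (norm z * sin (dR x y) / norm x) * (norm x * delta d f x)"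
    using \<open>cmod a \<le> norm z * sin (dR x y) / norm x\<close> by (intro mult_right_mono) (simp_all add: delta_def)
  also have "\<dots> = norm z * sin (dR x y) * delta d f x" using x by simp
  finally show ?thesis
    using decomp \<open>norm p \<le> norm z\<close> norm_triangle_ineq[of p "a *s L (Df d f x x)"]
    by (simp add: L_def algebra_simps)
qed

text \<open>With e = c y - x for a rescaling c y of y as in
  rescaling_close, diag_x v = Df(x) z + (Df(x + e) - Df(x)) z for the preimage z of
  rescaled_preimage; the first term is handled by restr_inv_Df_hperp_bound, the second by
  Kellogg's inequality for the variation of Df.\<close>
lemma normalized_inverse_pointwise:
  fixes D :: nat
  assumes x: "x \<noteq> 0" and y: "y \<noteq> 0"
    and ix: "restr_invertible d f x" and iy: "restr_invertible d f y"
    and degD: "\<And>i. d i \<le> D" and c: "cmod c = norm x / norm y"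
  shows "norm (restr_inv d f x (scale_diag d x v)) \<le> inv_norm d f y * (1 + sin (dR x y) * delta d f x
      + bw_norm d f * inv_norm d f x * (sqrt D * ((1 + norm (c *s y - x) / norm x) ^ (D - 1) - 1)))
      * norm v"
proof -
  define Mx where "Mx = inv_norm d f x"
  define My where "My = inv_norm d f y"
  define bw where "bw = bw_norm d f"
  define e where "e = c *s y - x"
  define G where "G = sqrt D * ((1 + norm e / norm x) ^ (D - 1) - 1)"
  have deg: "\<And>i. 1 \<le> d i" using restr_invertible_deg_pos[OF ix] .
  have factors_nonneg: "0 \<le> G" "0 \<le> bw" "0 \<le> Mx" "0 \<le> My" "0 \<le> delta d f x" "0 \<le> sin (dR x y)"
    using dR_props(3,4)[OF x y] bw_norm_nonneg inv_norm_nonneg[OF ix] inv_norm_nonneg[OF iy]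
    by (auto simp: G_def bw_def Mx_def My_def delta_def sin_ge_zero)
  obtain z where z: "z \<in> hperp y" "Df d f (c *s y) z = scale_diag d x v" "norm z \<le> My * norm v"
    using rescaled_preimage[OF iy x y deg c] unfolding My_def by blast
  define q where "q = unscale_diag d x (Df d f (x + e) z - Df d f x z)"
  have "scale_diag d x v = Df d f x z + scale_diag d x q"
    using z(2) by (simp add: q_def scale_unscale_diag[OF x deg] e_def)
  hence "norm (restr_inv d f x (scale_diag d x v))
      \<le> norm (restr_inv d f x (Df d f x z)) + norm (restr_inv d f x (scale_diag d x q))"
    by (simp add: restr_inv_add[OF ix] norm_triangle_ineq)
  also have "\<dots> \<le> norm z * (1 + sin (dR x y) * delta d f x) + Mx * (norm z * G * bw)"
  proof (rule add_mono)
    show "norm (restr_inv d f x (Df d f x z)) \<le> norm z * (1 + sin (dR x y) * delta d f x)"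
      by (rule restr_inv_Df_hperp_bound[OF ix x y z(1)])
    have "norm (restr_inv d f x (scale_diag d x q)) \<le> Mx * norm q"
      unfolding Mx_def by (rule inv_norm_bound[OF ix])
    also have "\<dots> \<le> Mx * (norm z * G * bw)"
      using norm_unscale_Df_diff[OF x deg degD] factors_nonneg
      by (intro mult_left_mono) (simp_all add: q_def G_def bw_def)
    finally show "norm (restr_inv d f x (scale_diag d x q)) \<le> Mx * (norm z * G * bw)" .
  qed
  also have "\<dots> = norm z * (1 + sin (dR x y) * delta d f x + bw * Mx * G)" by (simp add: algebra_simps)
  also have "\<dots> \<le> (My * norm v) * (1 + sin (dR x y) * delta d f x + bw * Mx * G)"
    using z(3) factors_nonneg by (intro mult_right_mono) auto
  finally show ?thesis by (simp add: Mx_def My_def bw_def G_def e_def ac_simps)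
qed

text \<open>The key inequality M(x) <= M(y) (1/(1-u)^2 + delta(f,x) dP(x,y)), for any D bounding
  the degrees: take the operator norm in the pointwise bound and apply growth_factor_bound
  with s = ||c y - x|| / ||x|| <= dR(x,y).\<close>
lemma inv_norm_estimate:
  fixes D :: nat
  assumes x: "x \<noteq> 0" and y: "y \<noteq> 0"
    and ix: "restr_invertible d f x" and iy: "restr_invertible d f y"
    and degD: "\<And>i. d i \<le> D"
    and u: "real D powr (3/2) / 2 * (bw_norm d f * inv_norm d f x) * dR x y < 1"
  shows "inv_norm d f x \<le> inv_norm d f y *
    (1 / (1 - real D powr (3/2) / 2 * (bw_norm d f * inv_norm d f x) * dR x y)\<^sup>2
     + delta d f x * dP x y)"
proof -
  obtain c where c: "cmod c = norm x / norm y" "norm (c *s y - x) \<le> norm x * dR x y"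
    using rescaling_close[OF x y] by blast
  define s where "s = norm (c *s y - x) / norm x"
  have s: "0 \<le> s" "s \<le> dR x y" using c(2) x by (simp_all add: s_def field_simps)
  have "inv_norm d f x \<le> inv_norm d f y * (1 + sin (dR x y) * delta d f x
      + bw_norm d f * inv_norm d f x * (sqrt D * ((1 + s) ^ (D - 1) - 1)))"
    unfolding inv_norm_def[of d f x] s_def
    using normalized_inverse_pointwise[OF x y ix iy degD c(1)]
    by (intro onorm_le) (simp add: inv_norm_def)
  also have "\<dots> \<le> inv_norm d f y * (1 / (1 - real D powr (3/2) / 2 * (bw_norm d f * inv_norm d f x)
      * dR x y)\<^sup>2 + delta d f x * dP x y)"
    using growth_factor_bound[OF inv_norm_lower_bound[OF ix x degD] s u] inv_norm_nonneg[OF iy]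
    by (intro mult_left_mono) (simp_all add: dP_def algebra_simps)
  finally show ?thesis .
qed

theorem lemma8:
  fixes d :: "'n::finite \<Rightarrow> nat"
    and f :: "'n \<Rightarrow> ('n option \<Rightarrow> nat) \<Rightarrow> complex"
    and x y :: "complex^'n option"
  assumes "CARD('n) \<ge> 2"
    and "Max (range d) \<ge> 2"
    and "f \<in> Hd d" and "f \<noteq> (\<lambda>_ _. 0)"
    and "x \<noteq> 0" and "y \<noteq> 0"
    and "crank (Df d f x) (hperp x) = CARD('n)"
    and "real (Max (range d)) powr (3/2) / 2 * real_of_ereal (mu d f x) * dR x y < 1"
    and "mu d f y < \<infinity>"
  shows "mu d f x \<le> mu d f y *
    ereal (1 / (1 - real (Max (range d)) powr (3/2) / 2 * real_of_ereal (mu d f x) * dR x y)\<^sup>2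
           + delta d f x * dP x y)"
proof -
  have ix: "restr_invertible d f x"
    using restr_invertible_if_surj[OF assms(5) Df_hperp_surj[OF assms(7)]] .
  have iy: "restr_invertible d f y" using assms(9) by (auto simp: mu_def split: if_splits)
  have degD: "d i \<le> Max (range d)" for i by simp
  have "inv_norm d f x \<le> inv_norm d f y *
      (1 / (1 - real (Max (range d)) powr (3/2) / 2 * (bw_norm d f * inv_norm d f x) * dR x y)\<^sup>2
       + delta d f x * dP x y)"
    using inv_norm_estimate[OF assms(5,6) ix iy degD] assms(8) by (simp add: mu_eq[OF ix])
  hence "bw_norm d f * inv_norm d f x \<le> bw_norm d f * (inv_norm d f y *
      (1 / (1 - real (Max (range d)) powr (3/2) / 2 * (bw_norm d f * inv_norm d f x) * dR x y)\<^sup>2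
       + delta d f x * dP x y))"
    by (intro mult_left_mono bw_norm_nonneg)
  thus ?thesis by (simp add: mu_eq[OF ix] mu_eq[OF iy] ac_simps)
qed

end
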